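(* Consider the instrumental-variables model described in the context, with first-stage coefficient $\pi_1 \neq 0$, and suppose that either Assumption A or Assumption B holds. Let $(\lambda_n)$ be a sequence of penalty parameters with $\lambda_n = o(n)$, i.e. $\lambda_n/n \to 0$. Then the ridge IV estimator \[ \hat\beta_{\text{ridge}} = \frac{\sum_{i=1}^n (Y_i-\bar Y)(Z_i-\bar Z)}{\sum_{i=1}^n (D_i-\bar D)(Z_i-\bar Z) + \lambda_n} \] is consistent: $\hat\beta_{\text{ridge}} \xrightarrow{p} \beta_1$ as $n\to\infty$.
   Context: Data model: for each sample size $n$, observations $(Y_i,D_i,Z_i)$, $i=1,\dots,n$, satisfy $Y_i=\beta_0+\beta_1 D_i+\epsilon_i$ and $D_i=\pi_0+\pi_1 Z_i+\eta_i$, where the error pairs $(\epsilon_i,\eta_i)$ are i.i.d. across $i$ with mean zero, $\mathrm{Var}(\epsilon_i)=\sigma_\epsilon^2<\infty$, $\mathrm{Var}(\eta_i)=\sigma_\eta^2<\infty$ and $\mathrm{Cov}(\epsilon_i,\eta_i)=\sigma_{\epsilon\eta}$ (the errors may be correlated, i.e. $D_i$ is endogenous), and the instruments $Z_i$ are independent of the errors. Bars denote sample means, e.g. $\bar Y=\frac1n\sum_i Y_i$. The penalty $\lambda_n$ is a deterministic sequence of nonnegative reals. Assumption A (instruments as constants): the analysis is conditional on the instruments, so $Z_1,Z_2,\dots$ is a deterministic real sequence, with $\frac1n\sum_{i=1}^n Z_i^2\to 1$ and $\frac1n\sum_{i=1}^n Z_i \to 0$. Assumption B (stochastic instruments): the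 $Z_i$ are i.i.d. random variables, independent of the errors, with $\mathrm{Var}(Z_i)=1$ and finite fourth moment $m_4=E[Z_i^4]$. *)

theory Defs
  imports "HOL-Probability.Probability"
begin

definition sample_mean :: "(nat \<Rightarrow> real) \<Rightarrow> nat \<Rightarrow> real" where
  "sample_mean X n = (\<Sum>i<n. X i) / real n"

definition ridge_iv :: "(nat \<Rightarrow> real) \<Rightarrow> (nat \<Rightarrow> real) \<Rightarrow> (nat \<Rightarrow> real) \<Rightarrow> real \<Rightarrow> nat \<Rightarrow> real" where
  "ridge_iv Y D Z lam n =
     (\<Sum>i<n. (Y i - sample_mean Y n) * (Z i - sample_mean Z n)) /
     ((\<Sum>i<n. (D i - sample_mean D n) * (Z i - sample_mean Z n)) + lam)"

definition conv_in_prob :: "'a measure \<Rightarrow> (nat \<Rightarrow> 'a \<Rightarrow> real) \<Rightarrow> real \<Rightarrow> bool" where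
  "conv_in_prob M X c \<longleftrightarrow>
     (\<forall>e>0. (\<lambda>n. measure M {\<omega> \<in> space M. \<bar>X n \<omega> - c\<bar> > e}) \<longlonglongrightarrow> 0)"

end

theory Submission
  imports Defs
begin

(* Dividing numerator and denominator by n, the estimator becomes
   cov(Y,Z) / (cov(D,Z) + lam_n / n) with sample covariances cov.  The model gives
   cov(D,Z) = pi1 cov(Z,Z) + cov(eta,Z) and cov(Y,Z) = beta1 cov(D,Z) + cov(eps,Z).  Under either
   assumption on the instruments, cov(Z,Z) --> 1 and cov(eps,Z), cov(eta,Z) --> 0 in probability,
   by Chebyshev's weak law applied to the pairwise orthogonal products eps_i Z_i and eta_i Z_i.
   As lam_n / n --> 0 and pi1 <> 0, the continuous mapping theorem yields the limit
   beta1 pi1 / pi1 = beta1. *)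

section \<open>Convergence in probability\<close>

lemma conv_in_prob_const:
  assumes "a \<longlonglongrightarrow> c"
  shows "conv_in_prob M (\<lambda>n \<omega>. a n) c"
  unfolding conv_in_prob_def
proof (intro allI impI)
  fix e :: real assume "e > 0"
  with assms have "eventually (\<lambda>n. \<bar>a n - c\<bar> < e) sequentially"
    by (simp add: tendsto_iff dist_real_def)
  then have "eventually (\<lambda>n. measure M {\<omega> \<in> space M. \<bar>a n - c\<bar> > e} = 0) sequentially"
    by eventually_elim simp
  then show "(\<lambda>n. measure M {\<omega> \<in> space M. \<bar>a n - c\<bar> > e}) \<longlonglongrightarrow> 0"
    by (rule tendsto_eventually)
qed

lemma conv_in_prob_cong_eventually:
  assumes "conv_in_prob M X c"
    and "eventually (\<lambda>n. \<forall>\<omega>\<in>space M. X n \<omega> = X' n \<omega>) sequentially"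
  shows "conv_in_prob M X' c"
  unfolding conv_in_prob_def
proof (intro allI impI)
  fix e :: real assume "e > 0"
  have "eventually (\<lambda>n. measure M {\<omega> \<in> space M. \<bar>X n \<omega> - c\<bar> > e}
      = measure M {\<omega> \<in> space M. \<bar>X' n \<omega> - c\<bar> > e}) sequentially"
    using assms(2) by eventually_elim (intro arg_cong[where f="measure M"] Collect_cong, auto)
  moreover have "(\<lambda>n. measure M {\<omega> \<in> space M. \<bar>X n \<omega> - c\<bar> > e}) \<longlonglongrightarrow> 0"
    using assms(1) \<open>e > 0\<close> unfolding conv_in_prob_def by blast
  ultimately show "(\<lambda>n. measure M {\<omega> \<in> space M. \<bar>X' n \<omega> - c\<bar> > e}) \<longlonglongrightarrow> 0"
    by (rule Lim_transform_eventually[rotated])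
qed

context prob_space
begin

lemma conv_in_prob_continuous_map:
  fixes g :: "real \<Rightarrow> real \<Rightarrow> real"
  assumes X: "\<And>n. X n \<in> borel_measurable M" and Y: "\<And>n. Y n \<in> borel_measurable M"
    and g: "(\<lambda>p. g (fst p) (snd p)) \<in> borel_measurable (borel \<Otimes>\<^sub>M borel)"
    and cont: "isCont (\<lambda>p. g (fst p) (snd p)) (a, b)"
    and XY: "conv_in_prob M X a" "conv_in_prob M Y b"
  shows "conv_in_prob M (\<lambda>n \<omega>. g (X n \<omega>) (Y n \<omega>)) (g a b)"
  unfolding conv_in_prob_def
proof (intro allI impI)
  fix e :: real assume "e > 0"
  then obtain d where "d > 0" and d: "\<And>p. p \<noteq> (a, b) \<Longrightarrow> norm (p - (a, b)) < d \<Longrightarrow>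
      norm (g (fst p) (snd p) - g a b) < e"
    using cont unfolding isCont_def LIM_eq by auto
  define r where "r = d / 3"
  have "r > 0"
    using \<open>d > 0\<close> by (simp add: r_def)
  define A where "A n = {\<omega> \<in> space M. \<bar>X n \<omega> - a\<bar> > r}" for n
  define B where "B n = {\<omega> \<in> space M. \<bar>Y n \<omega> - b\<bar> > r}" for n
  have [measurable]: "X n \<in> borel_measurable M" "Y n \<in> borel_measurable M"
    "(\<lambda>\<omega>. g (X n \<omega>) (Y n \<omega>)) \<in> borel_measurable M" for n
    using X Y measurable_compose[OF measurable_Pair[OF X Y] g] by auto
  have events: "A n \<in> events" "B n \<in> events"
    "{\<omega> \<in> space M. \<bar>g (X n \<omega>) (Y n \<omega>) - g a b\<bar> > e} \<in> events" for n
    unfolding A_def B_def by measurable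
  have bound: "prob {\<omega> \<in> space M. \<bar>g (X n \<omega>) (Y n \<omega>) - g a b\<bar> > e} \<le> prob (A n) + prob (B n)" for n
  proof -
    have "{\<omega> \<in> space M. \<bar>g (X n \<omega>) (Y n \<omega>) - g a b\<bar> > e} \<subseteq> A n \<union> B n"
    proof (rule subsetI, rule ccontr)
      fix \<omega> assume \<omega>: "\<omega> \<in> {\<omega> \<in> space M. \<bar>g (X n \<omega>) (Y n \<omega>) - g a b\<bar> > e}" "\<omega> \<notin> A n \<union> B n"
      then have "\<bar>X n \<omega> - a\<bar> + \<bar>Y n \<omega> - b\<bar> < d"
        using \<open>r > 0\<close> by (auto simp: A_def B_def r_def)
      then have "norm ((X n \<omega>, Y n \<omega>) - (a, b)) < d"
        using sqrt_sum_squares_le_sum_abs[of "X n \<omega> - a" "Y n \<omega> - b"] by (simp add: norm_Pair)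
      with d[of "(X n \<omega>, Y n \<omega>)"] \<omega> \<open>e > 0\<close> show False
        by (cases "(X n \<omega>, Y n \<omega>) = (a, b)") auto
    qed
    then have "prob {\<omega> \<in> space M. \<bar>g (X n \<omega>) (Y n \<omega>) - g a b\<bar> > e} \<le> prob (A n \<union> B n)"
      using events by (intro finite_measure_mono) auto
    also have "\<dots> \<le> prob (A n) + prob (B n)"
      using events by (intro measure_Un_le) auto
    finally show ?thesis .
  qed
  have "(\<lambda>n. prob (A n)) \<longlonglongrightarrow> 0" "(\<lambda>n. prob (B n)) \<longlonglongrightarrow> 0"
    using XY \<open>r > 0\<close> unfolding conv_in_prob_def A_def B_def by simp_all
  then have "(\<lambda>n. prob (A n) + prob (B n)) \<longlonglongrightarrow> 0"
    using tendsto_add by fastforce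
  then show "(\<lambda>n. prob {\<omega> \<in> space M. \<bar>g (X n \<omega>) (Y n \<omega>) - g a b\<bar> > e}) \<longlonglongrightarrow> 0"
    by (rule tendsto_sandwich[OF always_eventually always_eventually tendsto_const, rotated 2])
      (simp_all add: bound)
qed

lemma conv_in_prob_add:
  assumes "\<And>n. X n \<in> borel_measurable M" "\<And>n. Y n \<in> borel_measurable M"
    and "conv_in_prob M X a" "conv_in_prob M Y b"
  shows "conv_in_prob M (\<lambda>n \<omega>. X n \<omega> + Y n \<omega>) (a + b)"
proof (rule conv_in_prob_continuous_map[where g="(+)", OF assms(1,2) _ _ assms(3,4)])
  show "(\<lambda>p. fst p + snd p :: real) \<in> borel_measurable (borel \<Otimes>\<^sub>M borel)"
    by measurable
  show "isCont (\<lambda>p. fst p + snd p) (a, b)"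
    by (intro continuous_intros)
qed

lemma conv_in_prob_diff:
  assumes "\<And>n. X n \<in> borel_measurable M" "\<And>n. Y n \<in> borel_measurable M"
    and "conv_in_prob M X a" "conv_in_prob M Y b"
  shows "conv_in_prob M (\<lambda>n \<omega>. X n \<omega> - Y n \<omega>) (a - b)"
proof (rule conv_in_prob_continuous_map[where g="(-)", OF assms(1,2) _ _ assms(3,4)])
  show "(\<lambda>p. fst p - snd p :: real) \<in> borel_measurable (borel \<Otimes>\<^sub>M borel)"
    by measurable
  show "isCont (\<lambda>p. fst p - snd p) (a, b)"
    by (intro continuous_intros)
qed

lemma conv_in_prob_mult:
  assumes "\<And>n. X n \<in> borel_measurable M" "\<And>n. Y n \<in> borel_measurable M"
    and "conv_in_prob M X a" "conv_in_prob M Y b"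
  shows "conv_in_prob M (\<lambda>n \<omega>. X n \<omega> * Y n \<omega>) (a * b)"
proof (rule conv_in_prob_continuous_map[where g="(*)", OF assms(1,2) _ _ assms(3,4)])
  show "(\<lambda>p. fst p * snd p :: real) \<in> borel_measurable (borel \<Otimes>\<^sub>M borel)"
    by measurable
  show "isCont (\<lambda>p. fst p * snd p) (a, b)"
    by (intro continuous_intros)
qed

lemma conv_in_prob_divide:
  assumes "\<And>n. X n \<in> borel_measurable M" "\<And>n. Y n \<in> borel_measurable M"
    and "conv_in_prob M X a" "conv_in_prob M Y b" and "b \<noteq> 0"
  shows "conv_in_prob M (\<lambda>n \<omega>. X n \<omega> / Y n \<omega>) (a / b)"
proof (rule conv_in_prob_continuous_map[where g="(/)", OF assms(1,2) _ _ assms(3,4)])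
  show "(\<lambda>p. fst p / snd p :: real) \<in> borel_measurable (borel \<Otimes>\<^sub>M borel)"
    by measurable
  show "isCont (\<lambda>p. fst p / snd p) (a, b)"
    using assms(5) by (intro isCont_divide isCont_fst isCont_snd continuous_ident) auto
qed

lemma conv_in_prob_cmult:
  assumes "\<And>n. X n \<in> borel_measurable M" and "conv_in_prob M X a"
  shows "conv_in_prob M (\<lambda>n \<omega>. c * X n \<omega>) (c * a)"
  using conv_in_prob_mult[OF _ assms(1) conv_in_prob_const[OF tendsto_const] assms(2)] by simp

lemma conv_in_prob_zero_of_second_moment:
  assumes X: "\<And>n. X n \<in> borel_measurable M" and sq: "\<And>n. integrable M (\<lambda>\<omega>. (X n \<omega>)\<^sup>2)"
    and lim: "(\<lambda>n. expectation (\<lambda>\<omega>. (X n \<omega>)\<^sup>2)) \<longlonglongrightarrow> 0"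
  shows "conv_in_prob M X 0"
  unfolding conv_in_prob_def
proof (intro allI impI)
  fix e :: real assume "e > 0"
  have bound: "prob {\<omega> \<in> space M. \<bar>X n \<omega>\<bar> > e} \<le> expectation (\<lambda>\<omega>. (X n \<omega>)\<^sup>2) / e\<^sup>2" for n
  proof -
    have [measurable]: "X n \<in> borel_measurable M" by (rule X)
    have "prob {\<omega> \<in> space M. \<bar>X n \<omega>\<bar> > e} \<le> prob {\<omega> \<in> space M. \<bar>X n \<omega>\<bar> \<ge> e}"
      by (intro finite_measure_mono) auto
    also have "\<dots> \<le> expectation (\<lambda>\<omega>. (X n \<omega>)\<^sup>2) / e\<^sup>2"
      using sq \<open>e > 0\<close> by (intro second_moment_method) auto
    finally show ?thesis .
  qed
  have "(\<lambda>n. expectation (\<lambda>\<omega>. (X n \<omega>)\<^sup>2) / e\<^sup>2) \<longlonglongrightarrow> 0"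
    using tendsto_divide_zero[OF lim] .
  then show "(\<lambda>n. prob {\<omega> \<in> space M. \<bar>X n \<omega> - 0\<bar> > e}) \<longlonglongrightarrow> 0"
    by (rule tendsto_sandwich[OF always_eventually always_eventually tendsto_const, rotated 2])
      (simp_all add: bound)
qed

end

section \<open>Sample covariances\<close>

definition sample_cov :: "(nat \<Rightarrow> real) \<Rightarrow> (nat \<Rightarrow> real) \<Rightarrow> nat \<Rightarrow> real" where
  "sample_cov X Z n = (\<Sum>i<n. (X i - sample_mean X n) * (Z i - sample_mean Z n)) / real n"

lemma sum_diff_sample_mean: "(\<Sum>i<n. X i - sample_mean X n) = 0"
  by (cases "n = 0") (simp_all add: sum_subtractf sample_mean_def)

lemma sample_mean_cong:
  "(\<And>i. i < n \<Longrightarrow> X i = X' i) \<Longrightarrow> sample_mean X n = sample_mean X' n"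
  by (simp add: sample_mean_def)

lemma sample_cov_eq_sum: "sample_cov X Z n = (\<Sum>i<n. X i * (Z i - sample_mean Z n)) / real n"
proof -
  have "(\<Sum>i<n. sample_mean X n * (Z i - sample_mean Z n)) = 0"
    by (simp add: sum_distrib_left[symmetric] sum_diff_sample_mean)
  then show ?thesis
    unfolding sample_cov_def by (simp add: left_diff_distrib sum_subtractf)
qed

lemma sample_cov_eq_sample_mean_mult:
  "sample_cov X Z n = sample_mean (\<lambda>i. X i * Z i) n - sample_mean X n * sample_mean Z n"
  unfolding sample_cov_eq_sum sample_mean_def
  by (simp add: right_diff_distrib sum_subtractf sum_distrib_right diff_divide_distrib
      sum_divide_distrib[symmetric])

lemma sample_cov_affine:
  "sample_cov (\<lambda>i. a + b * X i + U i) Z n = b * sample_cov X Z n + sample_cov U Z n"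
proof -
  have "(\<Sum>i<n. a * (Z i - sample_mean Z n)) = 0"
    by (simp add: sum_distrib_left[symmetric] sum_diff_sample_mean)
  then show ?thesis
    unfolding sample_cov_eq_sum
    by (simp add: distrib_right sum.distrib sum_distrib_left mult.assoc add_divide_distrib)
qed

lemma ridge_iv_eq_sample_cov:
  assumes "n > 0"
  shows "ridge_iv Y D Z lam n = sample_cov Y Z n / (sample_cov D Z n + lam / real n)"
  using assms unfolding ridge_iv_def sample_cov_def by (simp add: add_divide_distrib[symmetric])

lemma borel_measurable_sample_mean [measurable]:
  assumes [measurable]: "\<And>i. X i \<in> borel_measurable M"
  shows "(\<lambda>\<omega>. sample_mean (\<lambda>i. X i \<omega>) n) \<in> borel_measurable M"
  unfolding sample_mean_def by measurable

lemma borel_measurable_sample_cov [measurable]: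
  assumes [measurable]: "\<And>i. X i \<in> borel_measurable M" "\<And>i. Z i \<in> borel_measurable M"
  shows "(\<lambda>\<omega>. sample_cov (\<lambda>i. X i \<omega>) (\<lambda>i. Z i \<omega>) n) \<in> borel_measurable M"
  unfolding sample_cov_def sample_mean_def by measurable

lemma (in prob_space) conv_in_prob_sample_cov:
  assumes X: "\<And>i. X i \<in> borel_measurable M" and Z: "\<And>i. Z i \<in> borel_measurable M"
    and XZ: "conv_in_prob M (\<lambda>n \<omega>. sample_mean (\<lambda>i. X i \<omega> * Z i \<omega>) n) c"
    and "conv_in_prob M (\<lambda>n \<omega>. sample_mean (\<lambda>i. X i \<omega>) n) a"
    and "conv_in_prob M (\<lambda>n \<omega>. sample_mean (\<lambda>i. Z i \<omega>) n) b"
  shows "conv_in_prob M (\<lambda>n \<omega>. sample_cov (\<lambda>i. X i \<omega>) (\<lambda>i. Z i \<omega>) n) (c - a * b)"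
proof -
  note X_mean = borel_measurable_sample_mean[OF X] and Z_mean = borel_measurable_sample_mean[OF Z]
  have XZ_mean: "(\<lambda>\<omega>. sample_mean (\<lambda>i. X i \<omega> * Z i \<omega>) n) \<in> borel_measurable M" for n
    using X Z by (intro borel_measurable_sample_mean borel_measurable_times)
  have "conv_in_prob M (\<lambda>n \<omega>. sample_mean (\<lambda>i. X i \<omega>) n * sample_mean (\<lambda>i. Z i \<omega>) n) (a * b)"
    by (rule conv_in_prob_mult[OF X_mean Z_mean assms(4,5)])
  then have "conv_in_prob M (\<lambda>n \<omega>. sample_mean (\<lambda>i. X i \<omega> * Z i \<omega>) n
      - sample_mean (\<lambda>i. X i \<omega>) n * sample_mean (\<lambda>i. Z i \<omega>) n) (c - a * b)"
    by (rule conv_in_prob_diff[OF XZ_mean borel_measurable_times[OF X_mean Z_mean] XZ])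
  then show ?thesis
    unfolding sample_cov_eq_sample_mean_mult .
qed

section \<open>Weak laws of large numbers\<close>

lemma integrable_mult_of_square_integrable:
  fixes X Y :: "'a \<Rightarrow> real"
  assumes [measurable]: "X \<in> borel_measurable M" "Y \<in> borel_measurable M"
    and "integrable M (\<lambda>\<omega>. (X \<omega>)\<^sup>2)" "integrable M (\<lambda>\<omega>. (Y \<omega>)\<^sup>2)"
  shows "integrable M (\<lambda>\<omega>. X \<omega> * Y \<omega>)"
proof (rule Bochner_Integration.integrable_bound)
  show "integrable M (\<lambda>\<omega>. (X \<omega>)\<^sup>2 + (Y \<omega>)\<^sup>2)"
    using assms by auto
  have "\<bar>x * y\<bar> \<le> x\<^sup>2 + y\<^sup>2" for x y :: real
  proof -
    have "2 * (\<bar>x\<bar> * \<bar>y\<bar>) \<le> x\<^sup>2 + y\<^sup>2"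
      using sum_squares_bound[of "\<bar>x\<bar>" "\<bar>y\<bar>"] by simp
    moreover have "0 \<le> \<bar>x\<bar> * \<bar>y\<bar>"
      by simp
    ultimately show ?thesis
      unfolding abs_mult by linarith
  qed
  then show "AE \<omega> in M. norm (X \<omega> * Y \<omega>) \<le> norm ((X \<omega>)\<^sup>2 + (Y \<omega>)\<^sup>2)"
    by simp
qed measurable

lemma (in finite_measure) integrable_square_of_integrable_power4:
  fixes f :: "'a \<Rightarrow> real"
  assumes [measurable]: "f \<in> borel_measurable M" and "integrable M (\<lambda>x. f x ^ 4)"
  shows "integrable M (\<lambda>x. (f x)\<^sup>2)"
proof (rule Bochner_Integration.integrable_bound)
  show "integrable M (\<lambda>x. 1 + f x ^ 4)"
    using assms by simp
  have "y\<^sup>2 \<le> 1 + y ^ 4" for y :: real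
  proof -
    have "2 * y\<^sup>2 \<le> 1 + y ^ 4"
      using sum_squares_bound[of 1 "y\<^sup>2"] by (simp flip: power_mult)
    moreover have "0 \<le> y\<^sup>2"
      by simp
    ultimately show ?thesis
      by linarith
  qed
  then show "AE x in M. norm ((f x)\<^sup>2) \<le> norm (1 + f x ^ 4)"
    by (simp add: zero_le_even_power)
qed measurable

lemma LIMSEQ_sum_const_divide_square:
  assumes "\<And>i. a i = c"
  shows "(\<lambda>n. (\<Sum>i<n. a i) / (real n)\<^sup>2) \<longlonglongrightarrow> (0 :: real)"
proof -
  have "(\<Sum>i<n. a i) / (real n)\<^sup>2 = c / real n" for n
    by (cases "n = 0") (simp_all add: assms power2_eq_square)
  then show ?thesis
    using lim_const_over_n[of c] by simp
qed

context prob_space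
begin

lemma conv_in_prob_sample_mean_orthogonal:
  assumes X: "\<And>i. X i \<in> borel_measurable M" and sq: "\<And>i. integrable M (\<lambda>\<omega>. (X i \<omega>)\<^sup>2)"
    and orth: "\<And>i j. i \<noteq> j \<Longrightarrow> expectation (\<lambda>\<omega>. X i \<omega> * X j \<omega>) = 0"
    and lim: "(\<lambda>n. (\<Sum>i<n. expectation (\<lambda>\<omega>. (X i \<omega>)\<^sup>2)) / (real n)\<^sup>2) \<longlonglongrightarrow> 0"
  shows "conv_in_prob M (\<lambda>n \<omega>. sample_mean (\<lambda>i. X i \<omega>) n) 0"
proof (rule conv_in_prob_zero_of_second_moment)
  show "(\<lambda>\<omega>. sample_mean (\<lambda>i. X i \<omega>) n) \<in> borel_measurable M" for n
    by (rule borel_measurable_sample_mean[OF X])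
  have prod: "integrable M (\<lambda>\<omega>. X i \<omega> * X j \<omega>)" for i j
    by (rule integrable_mult_of_square_integrable[OF X X sq sq])
  have sq_eq: "(sample_mean (\<lambda>i. X i \<omega>) n)\<^sup>2 = (\<Sum>i<n. \<Sum>j<n. X i \<omega> * X j \<omega>) / (real n)\<^sup>2" for n \<omega>
    by (simp add: sample_mean_def power_divide power2_eq_square sum_product)
  show "integrable M (\<lambda>\<omega>. (sample_mean (\<lambda>i. X i \<omega>) n)\<^sup>2)" for n
    unfolding sq_eq using prod by (intro integrable_divide integrable_sum) auto
  have diagonal: "(\<Sum>j<n. expectation (\<lambda>\<omega>. X i \<omega> * X j \<omega>)) = expectation (\<lambda>\<omega>. (X i \<omega>)\<^sup>2)"
    if "i < n" for i n
  proof -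
    have "(\<Sum>j<n. expectation (\<lambda>\<omega>. X i \<omega> * X j \<omega>))
        = (\<Sum>j<n. if j = i then expectation (\<lambda>\<omega>. (X i \<omega>)\<^sup>2) else 0)"
      by (rule sum.cong) (auto simp: orth power2_eq_square)
    then show ?thesis
      using that by simp
  qed
  have "expectation (\<lambda>\<omega>. (sample_mean (\<lambda>i. X i \<omega>) n)\<^sup>2)
      = (\<Sum>i<n. expectation (\<lambda>\<omega>. (X i \<omega>)\<^sup>2)) / (real n)\<^sup>2" for n
    unfolding sq_eq by (simp add: Bochner_Integration.integral_sum prod diagonal)
  with lim show "(\<lambda>n. expectation (\<lambda>\<omega>. (sample_mean (\<lambda>i. X i \<omega>) n)\<^sup>2)) \<longlonglongrightarrow> 0"
    by simp
qed

definition iid :: "'b measure \<Rightarrow> (nat \<Rightarrow> 'a \<Rightarrow> 'b) \<Rightarrow> bool" where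
  "iid N X \<longleftrightarrow> indep_vars (\<lambda>_. N) X UNIV \<and> (\<forall>i. distr M N (X i) = distr M N (X 0))"

lemma iid_measurable: "iid N X \<Longrightarrow> X i \<in> measurable M N"
  unfolding iid_def indep_vars_def by auto

lemma iid_compose:
  assumes X: "iid N X" and f: "f \<in> measurable N K"
  shows "iid K (\<lambda>i \<omega>. f (X i \<omega>))"
  unfolding iid_def
proof
  show "indep_vars (\<lambda>_. K) (\<lambda>i \<omega>. f (X i \<omega>)) UNIV"
    using X f unfolding iid_def by (auto intro: indep_vars_compose2[where N="\<lambda>_. K"])
  have "distr M K (\<lambda>\<omega>. f (X i \<omega>)) = distr M K (\<lambda>\<omega>. f (X 0 \<omega>))" for i
  proof -
    have "distr M K (\<lambda>\<omega>. f (X i \<omega>)) = distr (distr M N (X i)) K f"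
      using distr_distr[OF f iid_measurable[OF X]] by (simp add: comp_def)
    also have "\<dots> = distr (distr M N (X 0)) K f"
      using X unfolding iid_def by metis
    also have "\<dots> = distr M K (\<lambda>\<omega>. f (X 0 \<omega>))"
      using distr_distr[OF f iid_measurable[OF X]] by (simp add: comp_def)
    finally show ?thesis .
  qed
  then show "\<forall>i. distr M K (\<lambda>\<omega>. f (X i \<omega>)) = distr M K (\<lambda>\<omega>. f (X 0 \<omega>))" ..
qed

lemma
  fixes g :: "'b \<Rightarrow> real"
  assumes X: "iid N X" and g: "g \<in> borel_measurable N"
  shows iid_integrable_iff: "integrable M (\<lambda>\<omega>. g (X i \<omega>)) \<longleftrightarrow> integrable M (\<lambda>\<omega>. g (X 0 \<omega>))"
    and iid_expectation_eq: "expectation (\<lambda>\<omega>. g (X i \<omega>)) = expectation (\<lambda>\<omega>. g (X 0 \<omega>))"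
proof -
  have same: "distr M N (X i) = distr M N (X 0)"
    using X unfolding iid_def by blast
  show "integrable M (\<lambda>\<omega>. g (X i \<omega>)) \<longleftrightarrow> integrable M (\<lambda>\<omega>. g (X 0 \<omega>))"
    using integrable_distr_eq[OF iid_measurable[OF X] g, of i] integrable_distr_eq[OF iid_measurable[OF X] g, of 0]
    unfolding same by simp
  show "expectation (\<lambda>\<omega>. g (X i \<omega>)) = expectation (\<lambda>\<omega>. g (X 0 \<omega>))"
    using integral_distr[OF iid_measurable[OF X] g, of i] integral_distr[OF iid_measurable[OF X] g, of 0]
    unfolding same by simp
qed

lemma indep_vars_expectation_mult:
  fixes X :: "nat \<Rightarrow> 'a \<Rightarrow> real"
  assumes X: "indep_vars (\<lambda>_. borel) X UNIV" and "i \<noteq> j"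
    and "integrable M (X i)" "integrable M (X j)"
  shows "expectation (\<lambda>\<omega>. X i \<omega> * X j \<omega>) = expectation (X i) * expectation (X j)"
proof -
  have "indep_var borel ((\<lambda>f. f i) \<circ> (\<lambda>\<omega>. restrict (\<lambda>i. X i \<omega>) {i}))
      borel ((\<lambda>f. f j) \<circ> (\<lambda>\<omega>. restrict (\<lambda>i. X i \<omega>) {j}))"
    using \<open>i \<noteq> j\<close> by (intro indep_var_compose[OF indep_var_restrict[OF X]]) auto
  then have "indep_var borel (X i) borel (X j)"
    by (simp add: comp_def)
  then show ?thesis
    using assms(3,4) by (rule indep_var_lebesgue_integral)
qed

lemma iid_orthogonal:
  fixes X :: "nat \<Rightarrow> 'a \<Rightarrow> real"
  assumes X: "iid borel X" and "expectation (X 0) = 0" "integrable M (X 0)" and "i \<noteq> j"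
  shows "expectation (\<lambda>\<omega>. X i \<omega> * X j \<omega>) = 0"
proof -
  have "integrable M (X k)" "expectation (X k) = 0" for k
    using iid_integrable_iff[OF X, of "\<lambda>x. x" k] iid_expectation_eq[OF X, of "\<lambda>x. x" k] assms(2,3)
    by auto
  then show ?thesis
    using indep_vars_expectation_mult[of X i j] X \<open>i \<noteq> j\<close> unfolding iid_def by simp
qed

lemma iid_sample_mean_conv_in_prob:
  fixes X :: "nat \<Rightarrow> 'a \<Rightarrow> real"
  assumes X: "iid borel X" and sq: "integrable M (\<lambda>\<omega>. (X 0 \<omega>)\<^sup>2)"
  shows "conv_in_prob M (\<lambda>n \<omega>. sample_mean (\<lambda>i. X i \<omega>) n) (expectation (X 0))"
proof -
  define \<mu> where "\<mu> = expectation (X 0)"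
  note X_meas[measurable] = iid_measurable[OF X]
  have int0: "integrable M (X 0)"
    by (rule square_integrable_imp_integrable[OF X_meas sq])
  have Y: "iid borel (\<lambda>i \<omega>. X i \<omega> - \<mu>)"
    by (rule iid_compose[OF X, where f="\<lambda>x. x - \<mu>"]) measurable
  have Y_sq0: "integrable M (\<lambda>\<omega>. (X 0 \<omega> - \<mu>)\<^sup>2)"
    using sq int0 by (simp add: power2_diff)
  have Y_sq: "integrable M (\<lambda>\<omega>. (X i \<omega> - \<mu>)\<^sup>2)" for i
    using iid_integrable_iff[OF Y, of "\<lambda>x. x\<^sup>2" i] Y_sq0 by simp
  have "conv_in_prob M (\<lambda>n \<omega>. sample_mean (\<lambda>i. X i \<omega> - \<mu>) n) 0"
  proof (rule conv_in_prob_sample_mean_orthogonal)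
    show "expectation (\<lambda>\<omega>. (X i \<omega> - \<mu>) * (X j \<omega> - \<mu>)) = 0" if "i \<noteq> j" for i j
      using iid_orthogonal[OF Y _ _ that] int0 by (simp add: \<mu>_def prob_space)
    show "(\<lambda>n. (\<Sum>i<n. expectation (\<lambda>\<omega>. (X i \<omega> - \<mu>)\<^sup>2)) / (real n)\<^sup>2) \<longlonglongrightarrow> 0"
      by (rule LIMSEQ_sum_const_divide_square, rule iid_expectation_eq[OF Y, of "\<lambda>x. x\<^sup>2"]) measurable
  qed (use Y_sq in auto)
  moreover have "conv_in_prob M (\<lambda>n \<omega>. \<mu>) \<mu>"
    by (rule conv_in_prob_const) simp
  ultimately have "conv_in_prob M (\<lambda>n \<omega>. sample_mean (\<lambda>i. X i \<omega> - \<mu>) n + \<mu>) (0 + \<mu>)"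
    by (rule conv_in_prob_add[rotated 2]) (simp_all add: borel_measurable_sample_mean)
  then have "conv_in_prob M (\<lambda>n \<omega>. sample_mean (\<lambda>i. X i \<omega> - \<mu>) n + \<mu>) \<mu>"
    by simp
  then show ?thesis
    unfolding \<mu>_def[symmetric]
  proof (rule conv_in_prob_cong_eventually)
    show "eventually (\<lambda>n. \<forall>\<omega>\<in>space M. sample_mean (\<lambda>i. X i \<omega> - \<mu>) n + \<mu> = sample_mean (\<lambda>i. X i \<omega>) n)
        sequentially"
      using eventually_gt_at_top[of 0]
      by eventually_elim (simp add: sample_mean_def sum_subtractf diff_divide_distrib)
  qed
qed

lemma iid_weighted_sample_mean_conv_in_prob:
  fixes U :: "nat \<Rightarrow> 'a \<Rightarrow> real"
  assumes U: "iid borel U" "expectation (U 0) = 0" "integrable M (\<lambda>\<omega>. (U 0 \<omega>)\<^sup>2)"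
    and z: "(\<lambda>n. (\<Sum>i<n. (z i)\<^sup>2) / real n) \<longlonglongrightarrow> l"
  shows "conv_in_prob M (\<lambda>n \<omega>. sample_mean (\<lambda>i. U i \<omega> * z i) n) 0"
proof (rule conv_in_prob_sample_mean_orthogonal)
  note U_meas[measurable] = iid_measurable[OF U(1)]
  show "(\<lambda>\<omega>. U i \<omega> * z i) \<in> borel_measurable M" for i
    by measurable
  define s where "s = expectation (\<lambda>\<omega>. (U 0 \<omega>)\<^sup>2)"
  have U_sq: "integrable M (\<lambda>\<omega>. (U i \<omega>)\<^sup>2)" for i
    using iid_integrable_iff[OF U(1), of "\<lambda>x. x\<^sup>2" i] U(3) by simp
  then show "integrable M (\<lambda>\<omega>. (U i \<omega> * z i)\<^sup>2)" for i
    by (simp add: power_mult_distrib)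
  show "expectation (\<lambda>\<omega>. U i \<omega> * z i * (U j \<omega> * z j)) = 0" if "i \<noteq> j" for i j
  proof -
    have "expectation (\<lambda>\<omega>. U i \<omega> * z i * (U j \<omega> * z j)) = z i * z j * expectation (\<lambda>\<omega>. U i \<omega> * U j \<omega>)"
      by (simp add: ac_simps)
    also have "\<dots> = 0"
      using iid_orthogonal[OF U(1,2) square_integrable_imp_integrable[OF U_meas U(3)] that] by simp
    finally show ?thesis .
  qed
  have "expectation (\<lambda>\<omega>. (U i \<omega> * z i)\<^sup>2) = s * (z i)\<^sup>2" for i
    using iid_expectation_eq[OF U(1), of "\<lambda>x. x\<^sup>2" i] by (simp add: s_def power_mult_distrib)
  then have "(\<Sum>i<n. expectation (\<lambda>\<omega>. (U i \<omega> * z i)\<^sup>2)) / (real n)\<^sup>2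
      = s * ((\<Sum>i<n. (z i)\<^sup>2) / real n) * (1 / real n)" for n
    by (simp add: sum_distrib_left power2_eq_square)
  moreover have "(\<lambda>n. s * ((\<Sum>i<n. (z i)\<^sup>2) / real n) * (1 / real n)) \<longlonglongrightarrow> s * l * 0"
    by (intro tendsto_mult tendsto_const z lim_const_over_n)
  ultimately show "(\<lambda>n. (\<Sum>i<n. expectation (\<lambda>\<omega>. (U i \<omega> * z i)\<^sup>2)) / (real n)\<^sup>2) \<longlonglongrightarrow> 0"
    by simp
qed

lemma indep_iid_sample_mean_mult_conv_in_prob:
  fixes U Z :: "nat \<Rightarrow> 'a \<Rightarrow> real"
  assumes U: "iid borel U" "expectation (U 0) = 0" "integrable M (\<lambda>\<omega>. (U 0 \<omega>)\<^sup>2)"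
    and Z: "iid borel Z" "integrable M (\<lambda>\<omega>. (Z 0 \<omega>)\<^sup>2)"
    and indep: "indep_var (Pi\<^sub>M UNIV (\<lambda>_. borel)) (\<lambda>\<omega> i. Z i \<omega>) (Pi\<^sub>M UNIV (\<lambda>_. borel)) (\<lambda>\<omega> i. U i \<omega>)"
  shows "conv_in_prob M (\<lambda>n \<omega>. sample_mean (\<lambda>i. U i \<omega> * Z i \<omega>) n) 0"
proof (rule conv_in_prob_sample_mean_orthogonal)
  note U_meas[measurable] = iid_measurable[OF U(1)] and Z_meas[measurable] = iid_measurable[OF Z(1)]
  show "(\<lambda>\<omega>. U i \<omega> * Z i \<omega>) \<in> borel_measurable M" for i
    by measurable
  have U_sq: "integrable M (\<lambda>\<omega>. (U i \<omega>)\<^sup>2)" for i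
    using iid_integrable_iff[OF U(1), of "\<lambda>x. x\<^sup>2" i] U(3) by simp
  have Z_sq: "integrable M (\<lambda>\<omega>. (Z i \<omega>)\<^sup>2)" for i
    using iid_integrable_iff[OF Z(1), of "\<lambda>x. x\<^sup>2" i] Z(2) by simp
  have indep_fg: "indep_var borel (\<lambda>\<omega>. f (\<lambda>i. Z i \<omega>)) borel (\<lambda>\<omega>. g (\<lambda>i. U i \<omega>))"
    if "f \<in> borel_measurable (Pi\<^sub>M UNIV (\<lambda>_. borel))" "g \<in> borel_measurable (Pi\<^sub>M UNIV (\<lambda>_. borel))"
    for f g :: "(nat \<Rightarrow> real) \<Rightarrow> real"
    using indep_var_compose[OF indep that] by (simp add: comp_def)
  have sq_indep: "indep_var borel (\<lambda>\<omega>. (Z i \<omega>)\<^sup>2) borel (\<lambda>\<omega>. (U i \<omega>)\<^sup>2)" for i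
    by (rule indep_fg[of "\<lambda>v. (v i)\<^sup>2" "\<lambda>v. (v i)\<^sup>2"]) measurable
  have prod_indep: "indep_var borel (\<lambda>\<omega>. Z i \<omega> * Z j \<omega>) borel (\<lambda>\<omega>. U i \<omega> * U j \<omega>)" for i j
    by (rule indep_fg[of "\<lambda>v. v i * v j" "\<lambda>v. v i * v j"]) measurable
  have sq_eq: "(U i \<omega> * Z i \<omega>)\<^sup>2 = (Z i \<omega>)\<^sup>2 * (U i \<omega>)\<^sup>2" for i \<omega>
    by (simp add: power_mult_distrib)
  show "integrable M (\<lambda>\<omega>. (U i \<omega> * Z i \<omega>)\<^sup>2)" for i
    unfolding sq_eq by (rule indep_var_integrable[OF sq_indep Z_sq U_sq])
  show "expectation (\<lambda>\<omega>. U i \<omega> * Z i \<omega> * (U j \<omega> * Z j \<omega>)) = 0" if "i \<noteq> j" for i j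
  proof -
    have "expectation (\<lambda>\<omega>. U i \<omega> * Z i \<omega> * (U j \<omega> * Z j \<omega>))
        = expectation (\<lambda>\<omega>. (Z i \<omega> * Z j \<omega>) * (U i \<omega> * U j \<omega>))"
      by (simp add: ac_simps)
    also have "\<dots> = expectation (\<lambda>\<omega>. Z i \<omega> * Z j \<omega>) * expectation (\<lambda>\<omega>. U i \<omega> * U j \<omega>)"
      using prod_indep Z_meas U_meas Z_sq U_sq
      by (intro indep_var_lebesgue_integral integrable_mult_of_square_integrable) auto
    also have "expectation (\<lambda>\<omega>. U i \<omega> * U j \<omega>) = 0"
      using iid_orthogonal[OF U(1,2) square_integrable_imp_integrable[OF U_meas U(3)] that] by simp
    finally show ?thesis by simp
  qed
  have E_sq: "expectation (\<lambda>\<omega>. (U i \<omega> * Z i \<omega>)\<^sup>2)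
      = expectation (\<lambda>\<omega>. (Z 0 \<omega>)\<^sup>2) * expectation (\<lambda>\<omega>. (U 0 \<omega>)\<^sup>2)" for i
    unfolding sq_eq indep_var_lebesgue_integral[OF sq_indep Z_sq U_sq]
    using iid_expectation_eq[OF U(1), of "\<lambda>x. x\<^sup>2" i] iid_expectation_eq[OF Z(1), of "\<lambda>x. x\<^sup>2" i]
    by simp
  show "(\<lambda>n. (\<Sum>i<n. expectation (\<lambda>\<omega>. (U i \<omega> * Z i \<omega>)\<^sup>2)) / (real n)\<^sup>2) \<longlonglongrightarrow> 0"
    by (rule LIMSEQ_sum_const_divide_square[OF E_sq])
qed

end

section \<open>The two assumptions on the instruments\<close>

lemma borel_measurable_const_on_space:
  "\<forall>\<omega>\<in>space M. f \<omega> = c \<Longrightarrow> f \<in> borel_measurable M"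
  using measurable_cong[of M f "\<lambda>_. c"] by simp

lemma conv_in_prob_sample_var_deterministic:
  assumes Z: "\<forall>i. \<forall>\<omega>\<in>space M. Z i \<omega> = z i"
    and z2: "(\<lambda>n. (\<Sum>i<n. (z i)\<^sup>2) / real n) \<longlonglongrightarrow> l2"
    and z1: "(\<lambda>n. (\<Sum>i<n. z i) / real n) \<longlonglongrightarrow> l1"
  shows "conv_in_prob M (\<lambda>n \<omega>. sample_cov (\<lambda>i. Z i \<omega>) (\<lambda>i. Z i \<omega>) n) (l2 - l1\<^sup>2)"
proof (rule conv_in_prob_cong_eventually[OF conv_in_prob_const])
  show "(\<lambda>n. sample_cov z z n) \<longlonglongrightarrow> l2 - l1\<^sup>2"
    unfolding sample_cov_eq_sample_mean_mult sample_mean_def power2_eq_square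
    using tendsto_diff[OF z2 tendsto_mult[OF z1 z1]] by (simp add: power2_eq_square)
  show "eventually (\<lambda>n. \<forall>\<omega>\<in>space M. sample_cov z z n = sample_cov (\<lambda>i. Z i \<omega>) (\<lambda>i. Z i \<omega>) n) sequentially"
    using Z by simp
qed

lemma sets_vimage_algebra_compose_subset:
  assumes H: "H \<in> measurable M MH" and h: "h \<in> measurable MH N"
  shows "sigma_sets (space M) {(\<lambda>\<omega>. h (H \<omega>)) -` A \<inter> space M | A. A \<in> sets N}
    \<subseteq> sets (vimage_algebra (space M) H MH)"
proof -
  have "H \<in> space M \<rightarrow> space MH"
    using measurable_space[OF H] by auto
  then have hH: "(\<lambda>\<omega>. h (H \<omega>)) \<in> measurable (vimage_algebra (space M) H MH) N"
    by (rule measurable_compose[OF measurable_vimage_algebra1 h])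
  have "{(\<lambda>\<omega>. h (H \<omega>)) -` A \<inter> space M | A. A \<in> sets N} \<subseteq> sets (vimage_algebra (space M) H MH)"
    using measurable_sets[OF hH] by auto
  from sets.sigma_sets_subset[OF this] show ?thesis
    by simp
qed

context prob_space
begin

(* indep_var requires both variables to take values in the same space, hence the maps f and g. *)
lemma indep_var_compose_of_indep_set_vimage_algebra:
  assumes F: "F \<in> measurable M MF" and G: "G \<in> measurable M MG"
    and indep: "indep_set (sets (vimage_algebra (space M) F MF)) (sets (vimage_algebra (space M) G MG))"
    and f: "f \<in> measurable MF N" and g: "g \<in> measurable MG N"
  shows "indep_var N (\<lambda>\<omega>. f (F \<omega>)) N (\<lambda>\<omega>. g (G \<omega>))"
  unfolding indep_var_eq
proof
  show "random_variable N (\<lambda>\<omega>. f (F \<omega>)) \<and> random_variable N (\<lambda>\<omega>. g (G \<omega>))"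
    using measurable_compose[OF F f] measurable_compose[OF G g] by simp
  show "indep_set (sigma_sets (space M) {(\<lambda>\<omega>. f (F \<omega>)) -` A \<inter> space M | A. A \<in> sets N})
      (sigma_sets (space M) {(\<lambda>\<omega>. g (G \<omega>)) -` A \<inter> space M | A. A \<in> sets N})"
    using indep unfolding indep_set_def
    by (rule indep_sets_mono_sets)
      (use sets_vimage_algebra_compose_subset[OF F f] sets_vimage_algebra_compose_subset[OF G g]
        in \<open>auto split: bool.split\<close>)
qed

lemma conv_in_prob_sample_cov_deterministic:
  fixes U Z :: "nat \<Rightarrow> 'a \<Rightarrow> real"
  assumes U: "iid borel U" "expectation (U 0) = 0" "integrable M (\<lambda>\<omega>. (U 0 \<omega>)\<^sup>2)"
    and Z: "\<forall>i. \<forall>\<omega>\<in>space M. Z i \<omega> = z i"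
    and z2: "(\<lambda>n. (\<Sum>i<n. (z i)\<^sup>2) / real n) \<longlonglongrightarrow> l2"
    and z1: "(\<lambda>n. (\<Sum>i<n. z i) / real n) \<longlonglongrightarrow> l1"
  shows "conv_in_prob M (\<lambda>n \<omega>. sample_cov (\<lambda>i. U i \<omega>) (\<lambda>i. Z i \<omega>) n) 0"
proof -
  have Z_meas: "Z i \<in> borel_measurable M" for i
    using Z by (intro borel_measurable_const_on_space[of M "Z i" "z i"]) simp
  have "conv_in_prob M (\<lambda>n \<omega>. sample_mean (\<lambda>i. U i \<omega> * Z i \<omega>) n) 0"
    using iid_weighted_sample_mean_conv_in_prob[OF U z2]
    by (rule conv_in_prob_cong_eventually) (use Z in \<open>simp cong: sample_mean_cong\<close>)
  moreover have "conv_in_prob M (\<lambda>n \<omega>. sample_mean (\<lambda>i. U i \<omega>) n) 0"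
    using iid_sample_mean_conv_in_prob[OF U(1,3)] U(2) by simp
  moreover have "conv_in_prob M (\<lambda>n \<omega>. sample_mean (\<lambda>i. Z i \<omega>) n) l1"
    using conv_in_prob_const[OF z1]
    by (rule conv_in_prob_cong_eventually) (use Z in \<open>simp add: sample_mean_def\<close>)
  ultimately show ?thesis
    using conv_in_prob_sample_cov[OF iid_measurable[OF U(1)] Z_meas] by fastforce
qed

lemma iid_sample_var_conv_in_prob:
  fixes Z :: "nat \<Rightarrow> 'a \<Rightarrow> real"
  assumes Z: "iid borel Z" and Z4: "integrable M (\<lambda>\<omega>. (Z 0 \<omega>) ^ 4)"
  shows "conv_in_prob M (\<lambda>n \<omega>. sample_cov (\<lambda>i. Z i \<omega>) (\<lambda>i. Z i \<omega>) n) (variance (Z 0))"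
proof -
  note Z_meas[measurable] = iid_measurable[OF Z]
  have Z_sq: "integrable M (\<lambda>\<omega>. (Z 0 \<omega>)\<^sup>2)"
    by (rule integrable_square_of_integrable_power4[OF Z_meas Z4])
  have Z_int: "integrable M (Z 0)"
    by (rule square_integrable_imp_integrable[OF Z_meas Z_sq])
  have Z_times_Z: "iid borel (\<lambda>i \<omega>. Z i \<omega> * Z i \<omega>)"
    by (rule iid_compose[OF Z, where f="\<lambda>x. x * x"]) measurable
  have "integrable M (\<lambda>\<omega>. (Z 0 \<omega> * Z 0 \<omega>)\<^sup>2)"
    using Z4 by (simp add: power4_eq_xxxx power2_eq_square mult.assoc)
  then have "conv_in_prob M (\<lambda>n \<omega>. sample_mean (\<lambda>i. Z i \<omega> * Z i \<omega>) n)
      (expectation (\<lambda>\<omega>. Z 0 \<omega> * Z 0 \<omega>))"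
    by (rule iid_sample_mean_conv_in_prob[OF Z_times_Z])
  moreover have "conv_in_prob M (\<lambda>n \<omega>. sample_mean (\<lambda>i. Z i \<omega>) n) (expectation (Z 0))"
    by (rule iid_sample_mean_conv_in_prob[OF Z Z_sq])
  ultimately show ?thesis
    using conv_in_prob_sample_cov[OF Z_meas Z_meas] variance_eq[OF Z_int Z_sq]
    by (simp add: power2_eq_square)
qed

lemma indep_iid_sample_cov_conv_in_prob:
  fixes U Z :: "nat \<Rightarrow> 'a \<Rightarrow> real"
  assumes U: "iid borel U" "expectation (U 0) = 0" "integrable M (\<lambda>\<omega>. (U 0 \<omega>)\<^sup>2)"
    and Z: "iid borel Z" "integrable M (\<lambda>\<omega>. (Z 0 \<omega>)\<^sup>2)"
    and indep: "indep_var (Pi\<^sub>M UNIV (\<lambda>_. borel)) (\<lambda>\<omega> i. Z i \<omega>) (Pi\<^sub>M UNIV (\<lambda>_. borel)) (\<lambda>\<omega> i. U i \<omega>)"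
  shows "conv_in_prob M (\<lambda>n \<omega>. sample_cov (\<lambda>i. U i \<omega>) (\<lambda>i. Z i \<omega>) n) 0"
  using conv_in_prob_sample_cov[OF iid_measurable[OF U(1)] iid_measurable[OF Z(1)]
      indep_iid_sample_mean_mult_conv_in_prob[OF U Z indep]
      iid_sample_mean_conv_in_prob[OF U(1,3)] iid_sample_mean_conv_in_prob[OF Z]] U(2)
  by simp

lemma deterministic_instruments_sample_cov:
  fixes Z eps eta :: "nat \<Rightarrow> 'a \<Rightarrow> real"
  assumes eps: "iid borel eps" "expectation (eps 0) = 0" "integrable M (\<lambda>\<omega>. (eps 0 \<omega>)\<^sup>2)"
    and eta: "iid borel eta" "expectation (eta 0) = 0" "integrable M (\<lambda>\<omega>. (eta 0 \<omega>)\<^sup>2)"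
    and Z: "\<forall>i. \<forall>\<omega>\<in>space M. Z i \<omega> = z i"
    and z2: "(\<lambda>n. (\<Sum>i<n. (z i)\<^sup>2) / real n) \<longlonglongrightarrow> 1"
    and z1: "(\<lambda>n. (\<Sum>i<n. z i) / real n) \<longlonglongrightarrow> 0"
  shows "conv_in_prob M (\<lambda>n \<omega>. sample_cov (\<lambda>i. Z i \<omega>) (\<lambda>i. Z i \<omega>) n) 1"
    and "conv_in_prob M (\<lambda>n \<omega>. sample_cov (\<lambda>i. eps i \<omega>) (\<lambda>i. Z i \<omega>) n) 0"
    and "conv_in_prob M (\<lambda>n \<omega>. sample_cov (\<lambda>i. eta i \<omega>) (\<lambda>i. Z i \<omega>) n) 0"
  using conv_in_prob_sample_var_deterministic[OF Z z2 z1]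
    conv_in_prob_sample_cov_deterministic[OF eps Z z2 z1]
    conv_in_prob_sample_cov_deterministic[OF eta Z z2 z1]
  by simp_all

lemma stochastic_instruments_sample_cov:
  fixes Z eps eta :: "nat \<Rightarrow> 'a \<Rightarrow> real"
  assumes eps: "iid borel eps" "expectation (eps 0) = 0" "integrable M (\<lambda>\<omega>. (eps 0 \<omega>)\<^sup>2)"
    and eta: "iid borel eta" "expectation (eta 0) = 0" "integrable M (\<lambda>\<omega>. (eta 0 \<omega>)\<^sup>2)"
    and Z: "iid borel Z" and Z4: "integrable M (\<lambda>\<omega>. (Z 0 \<omega>) ^ 4)" and "variance (Z 0) = 1"
    and indep: "indep_set (sets (vimage_algebra (space M) (\<lambda>\<omega> i. Z i \<omega>) (Pi\<^sub>M UNIV (\<lambda>_. borel))))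
      (sets (vimage_algebra (space M) (\<lambda>\<omega> i. (eps i \<omega>, eta i \<omega>)) (Pi\<^sub>M UNIV (\<lambda>_. borel \<Otimes>\<^sub>M borel))))"
  shows "conv_in_prob M (\<lambda>n \<omega>. sample_cov (\<lambda>i. Z i \<omega>) (\<lambda>i. Z i \<omega>) n) 1"
    and "conv_in_prob M (\<lambda>n \<omega>. sample_cov (\<lambda>i. eps i \<omega>) (\<lambda>i. Z i \<omega>) n) 0"
    and "conv_in_prob M (\<lambda>n \<omega>. sample_cov (\<lambda>i. eta i \<omega>) (\<lambda>i. Z i \<omega>) n) 0"
proof -
  note [measurable] = iid_measurable[OF Z] iid_measurable[OF eps(1)] iid_measurable[OF eta(1)]
  show "conv_in_prob M (\<lambda>n \<omega>. sample_cov (\<lambda>i. Z i \<omega>) (\<lambda>i. Z i \<omega>) n) 1"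
    using iid_sample_var_conv_in_prob[OF Z Z4] \<open>variance (Z 0) = 1\<close> by simp
  have Z_sq: "integrable M (\<lambda>\<omega>. (Z 0 \<omega>)\<^sup>2)"
    by (rule integrable_square_of_integrable_power4[OF _ Z4]) measurable
  have Z_seq: "(\<lambda>\<omega> i. Z i \<omega>) \<in> measurable M (Pi\<^sub>M UNIV (\<lambda>_. borel))"
    by (rule measurable_PiM_single') auto
  have errors: "(\<lambda>\<omega> i. (eps i \<omega>, eta i \<omega>)) \<in> measurable M (Pi\<^sub>M UNIV (\<lambda>_. borel \<Otimes>\<^sub>M borel))"
    by (rule measurable_PiM_single') (auto simp: space_pair_measure)
  have ident: "(\<lambda>v. v) \<in> measurable (Pi\<^sub>M UNIV (\<lambda>_. borel)) (Pi\<^sub>M UNIV (\<lambda>_. borel :: real measure))"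
    by simp
  have seq_map: "(\<lambda>v i. k (v i)) \<in> measurable (Pi\<^sub>M UNIV (\<lambda>_. borel \<Otimes>\<^sub>M borel)) (Pi\<^sub>M UNIV (\<lambda>_. borel))"
    if "k \<in> borel_measurable (borel \<Otimes>\<^sub>M borel)" for k :: "real \<times> real \<Rightarrow> real"
    using that by (intro measurable_PiM_single') (auto intro: measurable_compose[OF measurable_component_singleton])
  have "indep_var (Pi\<^sub>M UNIV (\<lambda>_. borel)) (\<lambda>\<omega> i. Z i \<omega>) (Pi\<^sub>M UNIV (\<lambda>_. borel)) (\<lambda>\<omega> i. eps i \<omega>)"
    using indep_var_compose_of_indep_set_vimage_algebra[OF Z_seq errors indep ident seq_map[OF measurable_fst]]
    by simp
  moreover have "indep_var (Pi\<^sub>M UNIV (\<lambda>_. borel)) (\<lambda>\<omega> i. Z i \<omega>) (Pi\<^sub>M UNIV (\<lambda>_. borel)) (\<lambda>\<omega> i. eta i \<omega>)"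
    using indep_var_compose_of_indep_set_vimage_algebra[OF Z_seq errors indep ident seq_map[OF measurable_snd]]
    by simp
  ultimately show "conv_in_prob M (\<lambda>n \<omega>. sample_cov (\<lambda>i. eps i \<omega>) (\<lambda>i. Z i \<omega>) n) 0"
    and "conv_in_prob M (\<lambda>n \<omega>. sample_cov (\<lambda>i. eta i \<omega>) (\<lambda>i. Z i \<omega>) n) 0"
    using indep_iid_sample_cov_conv_in_prob[OF eps Z Z_sq] indep_iid_sample_cov_conv_in_prob[OF eta Z Z_sq]
    by simp_all
qed

lemma ridge_iv_conv_in_prob:
  fixes Y D Z eps eta :: "nat \<Rightarrow> 'a \<Rightarrow> real"
  assumes Y: "\<And>i \<omega>. Y i \<omega> = \<alpha> + \<beta> * D i \<omega> + eps i \<omega>"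
    and D: "\<And>i \<omega>. D i \<omega> = \<gamma> + \<pi> * Z i \<omega> + eta i \<omega>"
    and [measurable]: "\<And>i. Z i \<in> borel_measurable M" "\<And>i. eps i \<in> borel_measurable M"
      "\<And>i. eta i \<in> borel_measurable M"
    and "\<pi> \<noteq> 0" and lam: "(\<lambda>n. lam n / real n) \<longlonglongrightarrow> 0"
    and ZZ: "conv_in_prob M (\<lambda>n \<omega>. sample_cov (\<lambda>i. Z i \<omega>) (\<lambda>i. Z i \<omega>) n) 1"
    and eps: "conv_in_prob M (\<lambda>n \<omega>. sample_cov (\<lambda>i. eps i \<omega>) (\<lambda>i. Z i \<omega>) n) 0"
    and eta: "conv_in_prob M (\<lambda>n \<omega>. sample_cov (\<lambda>i. eta i \<omega>) (\<lambda>i. Z i \<omega>) n) 0"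
  shows "conv_in_prob M (\<lambda>n \<omega>. ridge_iv (\<lambda>i. Y i \<omega>) (\<lambda>i. D i \<omega>) (\<lambda>i. Z i \<omega>) (lam n) n) \<beta>"
proof -
  have D_eq: "D = (\<lambda>i \<omega>. \<gamma> + \<pi> * Z i \<omega> + eta i \<omega>)"
    by (intro ext) (rule D)
  have Y_eq: "Y = (\<lambda>i \<omega>. \<alpha> + \<beta> * D i \<omega> + eps i \<omega>)"
    by (intro ext) (rule Y)
  have [measurable]: "D i \<in> borel_measurable M" "Y i \<in> borel_measurable M" for i
    unfolding Y_eq D_eq by measurable
  have "conv_in_prob M (\<lambda>n \<omega>. \<pi> * sample_cov (\<lambda>i. Z i \<omega>) (\<lambda>i. Z i \<omega>) n
      + sample_cov (\<lambda>i. eta i \<omega>) (\<lambda>i. Z i \<omega>) n) (\<pi> * 1 + 0)"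
    by (rule conv_in_prob_add[OF _ _ conv_in_prob_cmult[OF _ ZZ] eta]; measurable)
  then have DZ: "conv_in_prob M (\<lambda>n \<omega>. sample_cov (\<lambda>i. D i \<omega>) (\<lambda>i. Z i \<omega>) n) \<pi>"
    unfolding D_eq sample_cov_affine by simp
  have "conv_in_prob M (\<lambda>n \<omega>. \<beta> * sample_cov (\<lambda>i. D i \<omega>) (\<lambda>i. Z i \<omega>) n
      + sample_cov (\<lambda>i. eps i \<omega>) (\<lambda>i. Z i \<omega>) n) (\<beta> * \<pi> + 0)"
    by (rule conv_in_prob_add[OF _ _ conv_in_prob_cmult[OF _ DZ] eps]; measurable)
  then have YZ: "conv_in_prob M (\<lambda>n \<omega>. sample_cov (\<lambda>i. Y i \<omega>) (\<lambda>i. Z i \<omega>) n) (\<beta> * \<pi>)"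
    unfolding Y_eq sample_cov_affine by simp
  have denom: "conv_in_prob M (\<lambda>n \<omega>. sample_cov (\<lambda>i. D i \<omega>) (\<lambda>i. Z i \<omega>) n + lam n / real n) (\<pi> + 0)"
    by (rule conv_in_prob_add[OF _ _ DZ conv_in_prob_const[OF lam]]; measurable)
  have nonzero: "\<pi> + 0 \<noteq> 0"
    using \<open>\<pi> \<noteq> 0\<close> by simp
  have "conv_in_prob M (\<lambda>n \<omega>. sample_cov (\<lambda>i. Y i \<omega>) (\<lambda>i. Z i \<omega>) n
      / (sample_cov (\<lambda>i. D i \<omega>) (\<lambda>i. Z i \<omega>) n + lam n / real n)) (\<beta> * \<pi> / (\<pi> + 0))"
    by (rule conv_in_prob_divide[OF _ _ YZ denom nonzero]; measurable)
  then have ratio: "conv_in_prob M (\<lambda>n \<omega>. sample_cov (\<lambda>i. Y i \<omega>) (\<lambda>i. Z i \<omega>) n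
      / (sample_cov (\<lambda>i. D i \<omega>) (\<lambda>i. Z i \<omega>) n + lam n / real n)) \<beta>"
    using \<open>\<pi> \<noteq> 0\<close> by simp
  show ?thesis
  proof (rule conv_in_prob_cong_eventually[OF ratio])
    show "eventually (\<lambda>n. \<forall>\<omega>\<in>space M. sample_cov (\<lambda>i. Y i \<omega>) (\<lambda>i. Z i \<omega>) n
        / (sample_cov (\<lambda>i. D i \<omega>) (\<lambda>i. Z i \<omega>) n + lam n / real n)
        = ridge_iv (\<lambda>i. Y i \<omega>) (\<lambda>i. D i \<omega>) (\<lambda>i. Z i \<omega>) (lam n) n) sequentially"
      using eventually_gt_at_top[of 0] by eventually_elim (simp add: ridge_iv_eq_sample_cov)
  qed
qed

end

theorem mainTheorem1:
  fixes M :: "'a measure"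
    and Y D Z eps eta :: "nat \<Rightarrow> 'a \<Rightarrow> real"
    and beta0 beta1 pi0 pi1 :: real
    and lam :: "nat \<Rightarrow> real"
  assumes P: "prob_space M"
    and pi1: "pi1 \<noteq> 0"
    and Ymodel: "\<And>i \<omega>. Y i \<omega> = beta0 + beta1 * D i \<omega> + eps i \<omega>"
    and Dmodel: "\<And>i \<omega>. D i \<omega> = pi0 + pi1 * Z i \<omega> + eta i \<omega>"
    and eps_meas: "\<And>i. eps i \<in> borel_measurable M"
    and eta_meas: "\<And>i. eta i \<in> borel_measurable M"
    and err_indep: "prob_space.indep_vars M (\<lambda>_. borel \<Otimes>\<^sub>M borel)
                      (\<lambda>i \<omega>. (eps i \<omega>, eta i \<omega>)) UNIV"
    and err_ident: "\<And>i. distr M (borel \<Otimes>\<^sub>M borel) (\<lambda>\<omega>. (eps i \<omega>, eta i \<omega>))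
                        = distr M (borel \<Otimes>\<^sub>M borel) (\<lambda>\<omega>. (eps 0 \<omega>, eta 0 \<omega>))"
    and eps_mean: "prob_space.expectation M (eps 0) = 0"
    and eta_mean: "prob_space.expectation M (eta 0) = 0"
    and eps_sq: "integrable M (\<lambda>\<omega>. (eps 0 \<omega>)\<^sup>2)"
    and eta_sq: "integrable M (\<lambda>\<omega>. (eta 0 \<omega>)\<^sup>2)"
    and lam_nonneg: "\<And>n. lam n \<ge> 0"
    and lam_o: "(\<lambda>n. lam n / real n) \<longlonglongrightarrow> 0"
    and instr:
      "(\<comment> \<open>Assumption A: deterministic instruments\<close>
        \<exists>z :: nat \<Rightarrow> real.
          (\<forall>i. \<forall>\<omega>\<in>space M. Z i \<omega> = z i) \<and>
          (\<lambda>n. (\<Sum>i<n. (z i)\<^sup>2) / real n) \<longlonglongrightarrow> 1 \<and>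
          (\<lambda>n. (\<Sum>i<n. z i) / real n) \<longlonglongrightarrow> 0)
       \<or>
       (\<comment> \<open>Assumption B: stochastic i.i.d. instruments independent of the errors\<close>
        (\<forall>i. Z i \<in> borel_measurable M) \<and>
        prob_space.indep_vars M (\<lambda>_. borel) Z UNIV \<and>
        (\<forall>i. distr M borel (Z i) = distr M borel (Z 0)) \<and>
        prob_space.indep_set M
          (sets (vimage_algebra (space M) (\<lambda>\<omega> i. Z i \<omega>) (Pi\<^sub>M UNIV (\<lambda>_. borel))))
          (sets (vimage_algebra (space M) (\<lambda>\<omega> i. (eps i \<omega>, eta i \<omega>))
                   (Pi\<^sub>M UNIV (\<lambda>_. borel \<Otimes>\<^sub>M borel)))) \<and>
        integrable M (\<lambda>\<omega>. (Z 0 \<omega>) ^ 4) \<and>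
        prob_space.variance M (Z 0) = 1)"
  shows "conv_in_prob M (\<lambda>n \<omega>. ridge_iv (\<lambda>i. Y i \<omega>) (\<lambda>i. D i \<omega>) (\<lambda>i. Z i \<omega>) (lam n) n) beta1"
proof -
  interpret prob_space M by (rule P)
  have errors: "iid (borel \<Otimes>\<^sub>M borel) (\<lambda>i \<omega>. (eps i \<omega>, eta i \<omega>))"
    using err_indep err_ident by (simp add: iid_def)
  have eps: "iid borel eps" and eta: "iid borel eta"
    using iid_compose[OF errors measurable_fst] iid_compose[OF errors measurable_snd] by simp_all
  have Z_meas: "Z i \<in> borel_measurable M" for i
    using instr by (blast intro: borel_measurable_const_on_space)
  have covs: "conv_in_prob M (\<lambda>n \<omega>. sample_cov (\<lambda>i. Z i \<omega>) (\<lambda>i. Z i \<omega>) n) 1 \<and>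
      conv_in_prob M (\<lambda>n \<omega>. sample_cov (\<lambda>i. eps i \<omega>) (\<lambda>i. Z i \<omega>) n) 0 \<and>
      conv_in_prob M (\<lambda>n \<omega>. sample_cov (\<lambda>i. eta i \<omega>) (\<lambda>i. Z i \<omega>) n) 0"
    using instr
  proof (elim disjE exE conjE)
    fix z assume "\<forall>i. \<forall>\<omega>\<in>space M. Z i \<omega> = z i" "(\<lambda>n. (\<Sum>i<n. (z i)\<^sup>2) / real n) \<longlonglongrightarrow> 1"
      "(\<lambda>n. (\<Sum>i<n. z i) / real n) \<longlonglongrightarrow> 0"
    from deterministic_instruments_sample_cov[OF eps eps_mean eps_sq eta eta_mean eta_sq this]
    show ?thesis by blast
  next
    assume "indep_vars (\<lambda>_. borel) Z UNIV" "\<forall>i. distr M borel (Z i) = distr M borel (Z 0)"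
    then have "iid borel Z"
      by (simp add: iid_def)
    moreover assume "indep_set (sets (vimage_algebra (space M) (\<lambda>\<omega> i. Z i \<omega>) (Pi\<^sub>M UNIV (\<lambda>_. borel))))
        (sets (vimage_algebra (space M) (\<lambda>\<omega> i. (eps i \<omega>, eta i \<omega>)) (Pi\<^sub>M UNIV (\<lambda>_. borel \<Otimes>\<^sub>M borel))))"
      "integrable M (\<lambda>\<omega>. (Z 0 \<omega>) ^ 4)" "variance (Z 0) = 1"
    ultimately show ?thesis
      using stochastic_instruments_sample_cov[OF eps eps_mean eps_sq eta eta_mean eta_sq] by blast
  qed
  show ?thesis
    by (rule ridge_iv_conv_in_prob[where eps=eps and eta=eta and \<alpha>=beta0 and \<gamma>=pi0])
      (use Ymodel Dmodel Z_meas eps_meas eta_meas pi1 lam_o covs in auto)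
qed

end
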